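(* Let $E=\mathcal O_{\mathbb P^1}(a)\oplus\mathcal O_{\mathbb P^1}(b)$ with $a,b\ge1$. Then $\mathrm{Gr}_2(H^0(E))\cap\mathbb{P}K^\perp$ is a transversal intersection if and only if $a=b=1$.
   Context: $K^\perp:=\ker(\det:\bigwedge^2H^0(E)\to H^0(\det E))$, and $\mathrm{Gr}_2(H^0(E))\subset\mathbb{P}(\bigwedge^2H^0(E))$ is the Plücker embedding. Two smooth subvarieties $S_1,S_2\subset\mathbb P^N$ intersect transversely if $T_pS_1+T_pS_2=T_p\mathbb P^N$ for every $p\in S_1\cap S_2$. *)

theory Defs
  imports "HOL-Analysis.Analysis" "HOL-Computational_Algebra.Polynomial"
begin

(* H^0(E) for E = O(a) + O(b) on P^1 over C, in the affine chart: pairs (f,g) of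
   polynomials with deg f <= a, deg g <= b (homogeneous forms of degree a, b dehomogenised). *)
definition sections :: "nat \<Rightarrow> nat \<Rightarrow> (complex poly \<times> complex poly) set" where
  "sections a b = {(f, g). degree f \<le> a \<and> degree g \<le> b}"

(* coordinates of a section w.r.t. the monomial basis: indices 0..a are the
   coefficients of f, indices a+1..a+b+1 those of g; dim H^0(E) = a+b+2 *)
definition coord :: "nat \<Rightarrow> complex poly \<times> complex poly \<Rightarrow> nat \<Rightarrow> complex" where
  "coord a s i = (if i \<le> a then coeff (fst s) i else coeff (snd s) (i - (a + 1)))"

(* \<And>^2 H^0(E), realised as alternating matrices in these coordinates *)
definition wedge2 :: "nat \<Rightarrow> nat \<Rightarrow> (nat \<Rightarrow> nat \<Rightarrow> complex) set" where
  "wedge2 a b = {M. (\<forall>i j. M i j = - M j i) \<and>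
                    (\<forall>i j. (a + b + 2 \<le> i \<or> a + b + 2 \<le> j) \<longrightarrow> M i j = 0)}"

definition wedge :: "(nat \<Rightarrow> complex) \<Rightarrow> (nat \<Rightarrow> complex) \<Rightarrow> nat \<Rightarrow> nat \<Rightarrow> complex" where
  "wedge v w = (\<lambda>i j. v i * w j - w i * v j)"

(* det : \<And>^2 H^0(E) \<rightarrow> H^0(det E) = H^0(O(a+b)), the linear map with
   (f1,g1) \<and> (f2,g2) \<mapsto> f1 g2 - f2 g1; value given as coefficient sequence *)
definition detmap :: "nat \<Rightarrow> nat \<Rightarrow> (nat \<Rightarrow> nat \<Rightarrow> complex) \<Rightarrow> nat \<Rightarrow> complex" where
  "detmap a b M k = (\<Sum>i\<le>a. \<Sum>j\<le>b. if i + j = k then M i (a + 1 + j) else 0)"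

(* affine cone over Gr_2(H^0(E)) in its Pluecker embedding *)
definition gr_cone :: "nat \<Rightarrow> nat \<Rightarrow> (nat \<Rightarrow> nat \<Rightarrow> complex) set" where
  "gr_cone a b = {wedge (coord a s) (coord a t) | s t. s \<in> sections a b \<and> t \<in> sections a b}"

(* K^perp = ker det, the affine cone over P K^perp *)
definition K_perp :: "nat \<Rightarrow> nat \<Rightarrow> (nat \<Rightarrow> nat \<Rightarrow> complex) set" where
  "K_perp a b = {M \<in> wedge2 a b. \<forall>k. detmap a b M k = 0}"

(* embedded (affine-cone) tangent space of a set S at p: velocities at 0 of
   complex-differentiable curves lying in S and passing through p *)
definition tangent_space :: "(nat \<Rightarrow> nat \<Rightarrow> complex) set \<Rightarrow> (nat \<Rightarrow> nat \<Rightarrow> complex)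
      \<Rightarrow> (nat \<Rightarrow> nat \<Rightarrow> complex) set" where
  "tangent_space S p = {D. \<exists>\<gamma>::complex \<Rightarrow> nat \<Rightarrow> nat \<Rightarrow> complex.
       \<gamma> 0 = p \<and> (\<forall>t. \<gamma> t \<in> S) \<and>
       (\<forall>i j. ((\<lambda>t. \<gamma> t i j) has_field_derivative D i j) (at 0))}"

definition transversal_Gr_K :: "nat \<Rightarrow> nat \<Rightarrow> bool" where
  "transversal_Gr_K a b =
     (\<forall>p \<in> gr_cone a b \<inter> K_perp a b. p \<noteq> (\<lambda>i j. 0) \<longrightarrow>
        {(\<lambda>i j. x i j + y i j) | x y. x \<in> tangent_space (gr_cone a b) p \<and> y \<in> tangent_space (K_perp a b) p}
          = wedge2 a b)"

end

theory Submission
  imports Defs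
begin

(* Since K^perp is a linear subspace, its tangent space at a point p = s \<and> t is K^perp itself, so
   transversality at p means that det maps the tangent space {s \<and> y + x \<and> t} of the
   Grassmannian cone onto H^0(O(a+b)), i.e. that every form of degree a + b can be written as
   f_s g_y - f_y g_s + f_x g_t - f_t g_x.

   If a >= 2 this fails at p = (1,0) \<and> (x,0), which lies in K^perp: the linearised Pluecker
   relations at this coordinate point kill the coordinate of every tangent vector of the
   Grassmannian along (x^a,0) \<and> (0,x^b), and that coordinate is the top coefficient of det, which
   vanishes on K^perp.  If b >= 2 the same happens at p = (0,1) \<and> (0,x).

   If a = b = 1, then det p = 0 and p \<noteq> 0 force a component of s and a component of t to be
   linearly independent linear forms, and two independent linear forms generate all quadratic
   forms. *)

definition det_pair :: "complex poly \<times> complex poly \<Rightarrow> complex poly \<times> complex poly \<Rightarrow> complex poly" where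
  "det_pair s t = fst s * snd t - fst t * snd s"

lemma coeff_mult_degree_le:
  assumes "degree f \<le> m" "degree g \<le> n"
  shows "coeff (f * g) k = (\<Sum>i\<le>m. \<Sum>j\<le>n. if i + j = k then coeff f i * coeff g j else 0)"
proof -
  have "f * g = (\<Sum>i\<le>m. monom (coeff f i) i) * (\<Sum>j\<le>n. monom (coeff g j) j)"
    using assms by (simp add: poly_as_sum_of_monoms')
  also have "\<dots> = (\<Sum>i\<le>m. \<Sum>j\<le>n. monom (coeff f i * coeff g j) (i + j))"
    by (simp add: sum_product mult_monom)
  finally show ?thesis
    by (simp add: coeff_sum coeff_monom)
qed

lemma degree_le_1_eq_pCons: "degree f \<le> 1 \<Longrightarrow> f = [:coeff f 0, coeff f 1:]"
  by (rule poly_eqI) (auto simp: coeff_pCons coeff_eq_0 split: nat.split)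

lemma in_span_of_independent_linear_polys:
  fixes p q c :: "'a::field poly"
  assumes "degree p \<le> 1" "degree q \<le> 1" "degree c \<le> 2"
    and independent: "coeff p 0 * coeff q 1 \<noteq> coeff p 1 * coeff q 0"
  shows "\<exists>u v. degree u \<le> 1 \<and> degree v \<le> 1 \<and> c = p * u + q * v"
proof -
  obtain s0 s1 t0 t1 where pq: "p = [:s0, s1:]" "q = [:t0, t1:]"
    using assms(1,2) degree_le_1_eq_pCons by metis
  have "c = [:coeff c 0, coeff c 1, coeff c 2:]"
    using assms(3) by (intro poly_eqI) (auto simp: coeff_pCons coeff_eq_0 numeral_2_eq_2 split: nat.split)
  then obtain c0 c1 c2 where c: "c = [:c0, c1, c2:]"
    by blast
  define \<delta> where "\<delta> = s0 * t1 - s1 * t0"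
  have "\<delta> * inverse \<delta> = 1"
    using independent by (simp add: \<delta>_def pq)
  \<comment> \<open>Cramer's rule for the coefficients of u = [:l, n:] and v = [:m, r:]\<close>
  define l m n r where "l = (c0 * t1 - c1 * t0) * inverse \<delta>" and "m = (s0 * c1 - s1 * c0) * inverse \<delta>"
    and "n = - c2 * t0 * inverse \<delta>" and "r = s0 * c2 * inverse \<delta>"
  have "s0 * l + t0 * m = c0 * (\<delta> * inverse \<delta>)"
    "s1 * l + s0 * n + t1 * m + t0 * r = c1 * (\<delta> * inverse \<delta>)"
    "s1 * n + t1 * r = c2 * (\<delta> * inverse \<delta>)"
    unfolding l_def m_def n_def r_def \<delta>_def by algebra+
  then have "c = p * [:l, n:] + q * [:m, r:]"
    using \<open>\<delta> * inverse \<delta> = 1\<close> by (simp add: pq c algebra_simps)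
  then show ?thesis
    by (intro exI[of _ "[:l, n:]"] exI[of _ "[:m, r:]"]) simp
qed

lemma mem_sections: "s \<in> sections a b \<longleftrightarrow> degree (fst s) \<le> a \<and> degree (snd s) \<le> b"
  by (cases s) (simp add: sections_def)

lemma zero_mem_sections: "0 \<in> sections a b"
  by (simp add: mem_sections)

lemma sections_add: "s \<in> sections a b \<Longrightarrow> t \<in> sections a b \<Longrightarrow> s + t \<in> sections a b"
  by (simp add: mem_sections degree_add_le)

lemma sections_smult: "s \<in> sections a b \<Longrightarrow> map_prod (smult c) (smult c) s \<in> sections a b"
  by (simp add: mem_sections map_prod_def split_beta)

lemma coord_fst: "i \<le> a \<Longrightarrow> coord a s i = coeff (fst s) i"
  by (simp add: coord_def)

lemma coord_snd: "a < i \<Longrightarrow> coord a s i = coeff (snd s) (i - (a + 1))"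
  by (simp add: coord_def)

lemma coord_eq_0:
  assumes "s \<in> sections a b" "a + b + 2 \<le> i"
  shows "coord a s i = 0"
  using assms by (auto simp: coord_def mem_sections intro!: coeff_eq_0)

lemma coord_add: "coord a (s + t) i = coord a s i + coord a t i"
  by (simp add: coord_def)

lemma coord_smult: "coord a (map_prod (smult c) (smult c) s) i = c * coord a s i"
  by (simp add: coord_def)

lemma coord_monom_fst: "k \<le> a \<Longrightarrow> coord a (monom 1 k, 0) = indicator {k}"
  by (auto simp: coord_def coeff_monom indicator_def fun_eq_iff)

lemma coord_monom_snd: "coord a (0, monom 1 k) = indicator {a + 1 + k}"
  by (auto simp: coord_def coeff_monom indicator_def fun_eq_iff)

lemma det_pair_add_left: "det_pair (s + s') t = det_pair s t + det_pair s' t"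
  by (simp add: det_pair_def algebra_simps)

lemma det_pair_add_right: "det_pair s (t + t') = det_pair s t + det_pair s t'"
  by (simp add: det_pair_def algebra_simps)

lemma wedge2I:
  "(\<And>i j. M i j = - M j i) \<Longrightarrow> (\<And>i j. a + b + 2 \<le> i \<or> a + b + 2 \<le> j \<Longrightarrow> M i j = 0)
    \<Longrightarrow> M \<in> wedge2 a b"
  unfolding wedge2_def by blast

lemma wedge2_antisym: "M \<in> wedge2 a b \<Longrightarrow> M i j = - M j i"
  unfolding wedge2_def by blast

lemma wedge2_eq_0: "M \<in> wedge2 a b \<Longrightarrow> a + b + 2 \<le> i \<or> a + b + 2 \<le> j \<Longrightarrow> M i j = 0"
  unfolding wedge2_def by blast

lemma wedge2_lincomb:
  assumes "M \<in> wedge2 a b" "M' \<in> wedge2 a b"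
  shows "(\<lambda>i j. c * M i j + d * M' i j) \<in> wedge2 a b"
proof (rule wedge2I)
  show "c * M i j + d * M' i j = - (c * M j i + d * M' j i)" for i j
    using wedge2_antisym[OF assms(1), of i j] wedge2_antisym[OF assms(2), of i j] by simp
  show "c * M i j + d * M' i j = 0" if "a + b + 2 \<le> i \<or> a + b + 2 \<le> j" for i j
    using wedge2_eq_0[OF assms(1) that] wedge2_eq_0[OF assms(2) that] by simp
qed

lemma wedge_mem_wedge2:
  assumes "\<And>i. a + b + 2 \<le> i \<Longrightarrow> v i = 0" "\<And>i. a + b + 2 \<le> i \<Longrightarrow> w i = 0"
  shows "wedge v w \<in> wedge2 a b"
  by (rule wedge2I) (auto simp: wedge_def assms)

lemma gr_cone_subset_wedge2: "gr_cone a b \<subseteq> wedge2 a b"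
  by (auto simp: gr_cone_def coord_eq_0 intro!: wedge_mem_wedge2)

lemma pluecker_relation:
  "wedge v w i j * wedge v w k l - wedge v w i k * wedge v w j l + wedge v w i l * wedge v w j k = 0"
  unfolding wedge_def by algebra

lemma detmap_lincomb:
  "detmap a b (\<lambda>i j. c * M i j + d * M' i j) k = c * detmap a b M k + d * detmap a b M' k"
  by (auto simp: detmap_def sum_distrib_left simp flip: sum.distrib intro!: sum.cong)

lemma detmap_eq_0: "a + b < k \<Longrightarrow> detmap a b M k = 0"
  by (simp add: detmap_def)

lemma detmap_top: "detmap a b M (a + b) = M a (a + 1 + b)"
proof -
  have "(\<Sum>j\<le>b. if i + j = a + b then M i (a + 1 + j) else 0) = (if i = a then M a (a + 1 + b) else 0)"
    if "i \<le> a" for i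
    using that by (cases "i = a") (auto intro!: sum.neutral)
  then show ?thesis
    by (simp add: detmap_def)
qed

lemma detmap_wedge_coord:
  assumes "s \<in> sections a b" "t \<in> sections a b"
  shows "detmap a b (wedge (coord a s) (coord a t)) k = coeff (det_pair s t) k"
proof -
  have "coeff (det_pair s t) k =
      (\<Sum>i\<le>a. \<Sum>j\<le>b. if i + j = k then coeff (fst s) i * coeff (snd t) j else 0)
    - (\<Sum>i\<le>a. \<Sum>j\<le>b. if i + j = k then coeff (fst t) i * coeff (snd s) j else 0)"
    using assms coeff_mult_degree_le[of "fst s" a "snd t" b] coeff_mult_degree_le[of "fst t" a "snd s" b]
    by (simp add: det_pair_def mem_sections)
  also have "\<dots> = detmap a b (wedge (coord a s) (coord a t)) k"
    by (auto simp: detmap_def wedge_def coord_fst coord_snd simp flip: sum_subtractf intro!: sum.cong)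
  finally show ?thesis ..
qed

lemma detmap_eq_coeff:
  obtains c where "degree c \<le> a + b" "\<And>k. detmap a b M k = coeff c k"
proof
  let ?c = "\<Sum>k\<le>a + b. monom (detmap a b M k) k"
  show "detmap a b M k = coeff ?c k" for k
    by (simp add: coeff_sum coeff_monom detmap_eq_0)
  show "degree ?c \<le> a + b"
    by (intro degree_le) (simp add: coeff_sum coeff_monom)
qed

lemma K_perp_subset_wedge2: "K_perp a b \<subseteq> wedge2 a b"
  by (auto simp: K_perp_def)

lemma K_perp_lincomb:
  assumes "M \<in> K_perp a b" "M' \<in> K_perp a b"
  shows "(\<lambda>i j. c * M i j + d * M' i j) \<in> K_perp a b"
  using assms wedge2_lincomb by (simp add: K_perp_def detmap_lincomb)

lemma K_perp_entry_top: "M \<in> K_perp a b \<Longrightarrow> M a (a + 1 + b) = 0"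
  using detmap_top[of a b M] by (simp add: K_perp_def)

lemma wedge_coord_mem_K_perp_iff:
  assumes "s \<in> sections a b" "t \<in> sections a b"
  shows "wedge (coord a s) (coord a t) \<in> K_perp a b \<longleftrightarrow> det_pair s t = 0"
proof -
  have "wedge (coord a s) (coord a t) \<in> wedge2 a b"
    using assms by (auto simp: coord_eq_0 intro!: wedge_mem_wedge2)
  then show ?thesis
    using assms by (simp add: K_perp_def detmap_wedge_coord poly_eq_iff)
qed

lemma wedge_coord_mem_gr_cone_K_perp:
  assumes "s \<in> sections a b" "t \<in> sections a b" "det_pair s t = 0"
  shows "wedge (coord a s) (coord a t) \<in> gr_cone a b \<inter> K_perp a b"
  using assms wedge_coord_mem_K_perp_iff unfolding gr_cone_def by blast

lemma tangent_space_entry_relation: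
  assumes "D \<in> tangent_space S p" "\<And>M. M \<in> S \<Longrightarrow> M i j = c * M k l"
  shows "D i j = c * D k l"
proof -
  obtain \<gamma> where \<gamma>: "\<And>t. \<gamma> t \<in> S" "\<And>i j. ((\<lambda>t. \<gamma> t i j) has_field_derivative D i j) (at 0)"
    using assms(1) by (auto simp: tangent_space_def)
  have "(\<lambda>t. \<gamma> t i j) = (\<lambda>t. c * \<gamma> t k l)"
    using \<gamma>(1) assms(2) by blast
  moreover have "((\<lambda>t. c * \<gamma> t k l) has_field_derivative c * D k l) (at 0)"
    using \<gamma>(2) by (rule DERIV_cmult)
  ultimately show ?thesis
    using \<gamma>(2)[of i j] DERIV_unique by metis
qed

lemma tangent_space_entry_eq_0:
  assumes "D \<in> tangent_space S p" "\<And>M. M \<in> S \<Longrightarrow> M i j = 0"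
  shows "D i j = 0"
  using tangent_space_entry_relation[of D S p i j 0 0 0] assms by simp

lemma tangent_space_subset_wedge2:
  assumes "S \<subseteq> wedge2 a b"
  shows "tangent_space S p \<subseteq> wedge2 a b"
proof
  fix D assume D: "D \<in> tangent_space S p"
  show "D \<in> wedge2 a b"
  proof (rule wedge2I)
    show "D i j = - D j i" for i j
    proof -
      have "M i j = - 1 * M j i" if "M \<in> S" for M
        using wedge2_antisym[of M a b i j] that assms by auto
      then show ?thesis
        using tangent_space_entry_relation[OF D] by fastforce
    qed
    show "D i j = 0" if "a + b + 2 \<le> i \<or> a + b + 2 \<le> j" for i j
      using tangent_space_entry_eq_0[OF D, of i j] assms wedge2_eq_0[OF _ that] by blast
  qed
qed

lemma tangent_space_line:
  assumes "\<And>\<tau>. (\<lambda>i j. p i j + \<tau> * D i j) \<in> S"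
  shows "D \<in> tangent_space S p"
  unfolding tangent_space_def
proof (intro CollectI exI[of _ "\<lambda>\<tau> i j. p i j + \<tau> * D i j"] conjI allI)
  show "((\<lambda>\<tau>. p i j + \<tau> * D i j) has_field_derivative D i j) (at 0)" for i j
    by (auto intro!: derivative_eq_intros)
  show "(\<lambda>i j. p i j + 0 * D i j) = p" by simp
  show "(\<lambda>i j. p i j + \<tau> * D i j) \<in> S" for \<tau> by (rule assms)
qed

lemma tangent_space_gr_cone_pluecker:
  assumes "D \<in> tangent_space (gr_cone a b) p"
  shows "D i j * p k l + D k l * p i j - (D i k * p j l + D j l * p i k)
           + (D i l * p j k + D j k * p i l) = 0"
proof -
  obtain \<gamma> where \<gamma>: "\<gamma> 0 = p" "\<And>t. \<gamma> t \<in> gr_cone a b"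
      "\<And>i j. ((\<lambda>t. \<gamma> t i j) has_field_derivative D i j) (at 0)"
    using assms by (auto simp: tangent_space_def)
  have "(\<lambda>t. \<gamma> t i j * \<gamma> t k l - \<gamma> t i k * \<gamma> t j l + \<gamma> t i l * \<gamma> t j k) = (\<lambda>t. 0)"
  proof
    fix t
    obtain v w where "\<gamma> t = wedge v w"
      using \<gamma>(2)[of t] by (auto simp: gr_cone_def)
    then show "\<gamma> t i j * \<gamma> t k l - \<gamma> t i k * \<gamma> t j l + \<gamma> t i l * \<gamma> t j k = 0"
      by (simp add: pluecker_relation)
  qed
  moreover have "((\<lambda>t. \<gamma> t i j * \<gamma> t k l - \<gamma> t i k * \<gamma> t j l + \<gamma> t i l * \<gamma> t j k)
      has_field_derivative D i j * p k l + D k l * p i j - (D i k * p j l + D j l * p i k)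
        + (D i l * p j k + D j k * p i l)) (at 0)"
    unfolding \<gamma>(1)[symmetric] by (intro DERIV_add DERIV_diff DERIV_mult \<gamma>(3))
  ultimately show ?thesis
    using DERIV_const DERIV_unique by metis
qed

lemma wedge_coord_tangent_gr_cone:
  assumes "s \<in> sections a b" "t \<in> sections a b" "x \<in> sections a b" "y \<in> sections a b"
  shows "(\<lambda>i j. wedge (coord a s) (coord a y) i j + wedge (coord a x) (coord a t) i j)
           \<in> tangent_space (gr_cone a b) (wedge (coord a s) (coord a t))"
proof -
  define s' where "s' \<tau> = s + map_prod (smult \<tau>) (smult \<tau>) x" for \<tau>
  define t' where "t' \<tau> = t + map_prod (smult \<tau>) (smult \<tau>) y" for \<tau>
  have "wedge (coord a (s' \<tau>)) (coord a (t' \<tau>)) \<in> gr_cone a b" for \<tau>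
    using assms unfolding gr_cone_def s'_def t'_def by (blast intro: sections_add sections_smult)
  moreover have "wedge (coord a (s' 0)) (coord a (t' 0)) = wedge (coord a s) (coord a t)"
    by (intro ext) (simp add: wedge_def s'_def t'_def coord_add coord_smult)
  moreover have "((\<lambda>\<tau>. wedge (coord a (s' \<tau>)) (coord a (t' \<tau>)) i j) has_field_derivative
          wedge (coord a s) (coord a y) i j + wedge (coord a x) (coord a t) i j) (at 0)" for i j
    unfolding s'_def t'_def wedge_def coord_add coord_smult
    by (auto intro!: derivative_eq_intros simp: algebra_simps)
  ultimately show ?thesis
    unfolding tangent_space_def
    by (intro CollectI exI[of _ "\<lambda>\<tau>. wedge (coord a (s' \<tau>)) (coord a (t' \<tau>))"]) simp
qed

lemma not_transversal_at_coordinate_point: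
  assumes "wedge (indicator {i}) (indicator {j}) \<in> gr_cone a b \<inter> K_perp a b"
    and "i \<noteq> j" "i \<notin> {a, a + 1 + b}" "j \<notin> {a, a + 1 + b}"
  shows "\<not> transversal_Gr_K a b"
proof
  assume "transversal_Gr_K a b"
  define p :: "nat \<Rightarrow> nat \<Rightarrow> complex" where "p = wedge (indicator {i}) (indicator {j})"
  define e :: "nat \<Rightarrow> nat \<Rightarrow> complex" where "e = wedge (indicator {a}) (indicator {a + 1 + b})"
  have "p i j = 1"
    using \<open>i \<noteq> j\<close> by (simp add: p_def wedge_def)
  then have "p \<noteq> (\<lambda>i j. 0)"
    by auto
  moreover have "e \<in> wedge2 a b"
    unfolding e_def by (rule wedge_mem_wedge2) auto
  ultimately obtain X Y where XY: "e = (\<lambda>i j. X i j + Y i j)"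
      "X \<in> tangent_space (gr_cone a b) p" "Y \<in> tangent_space (K_perp a b) p"
    using \<open>transversal_Gr_K a b\<close> assms(1) unfolding transversal_Gr_K_def p_def by blast
  have "X a (a + 1 + b) = 0"
    using tangent_space_gr_cone_pluecker[OF XY(2), of i j a "a + 1 + b"] assms(2-4)
    by (simp add: p_def wedge_def)
  moreover have "Y a (a + 1 + b) = 0"
    by (rule tangent_space_entry_eq_0[OF XY(3) K_perp_entry_top])
  moreover have "e a (a + 1 + b) = 1"
    by (simp add: e_def wedge_def)
  ultimately show False
    using XY(1) by (metis add_0 zero_neq_one)
qed

lemma transversal_Gr_K_imp_eq_1:
  assumes "1 \<le> a" "1 \<le> b" "transversal_Gr_K a b"
  shows "a = 1 \<and> b = 1"
proof (rule ccontr)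
  assume "\<not> (a = 1 \<and> b = 1)"
  with assms(1,2) consider "2 \<le> a" | "2 \<le> b"
    by linarith
  then show False
  proof cases
    case 1
    then have "wedge (indicator {0}) (indicator {1}) \<in> gr_cone a b \<inter> K_perp a b"
      using wedge_coord_mem_gr_cone_K_perp[of "(monom 1 0, 0)" a b "(monom 1 1, 0)"]
        coord_monom_fst[of 0 a] coord_monom_fst[of 1 a]
      by (simp add: mem_sections det_pair_def degree_monom_eq)
    from not_transversal_at_coordinate_point[OF this] 1 assms(3) show False
      by simp
  next
    case 2
    then have "wedge (indicator {a + 1}) (indicator {a + 2}) \<in> gr_cone a b \<inter> K_perp a b"
      using wedge_coord_mem_gr_cone_K_perp[of "(0, monom 1 0)" a b "(0, monom 1 1)"]
        coord_monom_snd[of a 0] coord_monom_snd[of a 1]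
      by (simp add: mem_sections det_pair_def degree_monom_eq)
    from not_transversal_at_coordinate_point[OF this] 2 assms(3) show False
      by simp
  qed
qed

lemma tangent_spaces_sum_eq_wedge2_if_det_pair_surj:
  assumes "s \<in> sections a b" "t \<in> sections a b" "det_pair s t = 0"
    and p: "p = wedge (coord a s) (coord a t)"
    and onto: "\<And>c. degree c \<le> a + b \<Longrightarrow> \<exists>x\<in>sections a b. \<exists>y\<in>sections a b. c = det_pair s y + det_pair x t"
  shows "{(\<lambda>i j. X i j + Y i j) | X Y. X \<in> tangent_space (gr_cone a b) p \<and> Y \<in> tangent_space (K_perp a b) p}
           = wedge2 a b" (is "?T = _")
proof
  have "(\<lambda>i j. 1 * X i j + 1 * Y i j) \<in> wedge2 a b"
    if "X \<in> tangent_space (gr_cone a b) p" "Y \<in> tangent_space (K_perp a b) p" for X Y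
    using that tangent_space_subset_wedge2[OF gr_cone_subset_wedge2] tangent_space_subset_wedge2[OF K_perp_subset_wedge2]
    by (intro wedge2_lincomb) blast+
  then show "?T \<subseteq> wedge2 a b"
    by auto
next
  show "wedge2 a b \<subseteq> ?T"
  proof
    fix N assume N: "N \<in> wedge2 a b"
    obtain c where "degree c \<le> a + b" and c: "\<And>k. detmap a b N k = coeff c k"
      using detmap_eq_coeff by blast
    then obtain x y where xy: "x \<in> sections a b" "y \<in> sections a b" "c = det_pair s y + det_pair x t"
      using onto by blast
    define X where "X = (\<lambda>i j. 1 * wedge (coord a s) (coord a y) i j + 1 * wedge (coord a x) (coord a t) i j)"
    define Y where "Y = (\<lambda>i j. 1 * N i j + (- 1) * X i j)"
    have X: "X \<in> tangent_space (gr_cone a b) p"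
      unfolding X_def p using wedge_coord_tangent_gr_cone[OF assms(1,2) xy(1,2)] by simp
    have "detmap a b X k = detmap a b N k" for k
      unfolding X_def detmap_lincomb using assms(1,2) xy by (simp add: c detmap_wedge_coord)
    then have "detmap a b Y k = 0" for k
      unfolding Y_def detmap_lincomb by simp
    moreover have "X \<in> wedge2 a b"
      using X tangent_space_subset_wedge2[OF gr_cone_subset_wedge2] by blast
    then have "Y \<in> wedge2 a b"
      unfolding Y_def using N by (intro wedge2_lincomb)
    ultimately have "Y \<in> K_perp a b"
      by (simp add: K_perp_def)
    moreover have "p \<in> K_perp a b"
      unfolding p using assms(1-3) by (simp add: wedge_coord_mem_K_perp_iff)
    ultimately have "Y \<in> tangent_space (K_perp a b) p"
      using K_perp_lincomb[of p a b Y 1] by (intro tangent_space_line) simp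
    moreover have "N = (\<lambda>i j. X i j + Y i j)"
      by (simp add: Y_def)
    ultimately show "N \<in> ?T"
      using X by blast
  qed
qed

lemma independent_components_if_wedge_nonzero_1_1:
  assumes "s \<in> sections 1 1" "t \<in> sections 1 1" "det_pair s t = 0"
    and "wedge (coord 1 s) (coord 1 t) \<noteq> (\<lambda>i j. 0)"
  shows "\<exists>p\<in>{fst s, snd s}. \<exists>q\<in>{fst t, snd t}. coeff p 0 * coeff q 1 \<noteq> coeff p 1 * coeff q 0"
proof (rule ccontr)
  assume "\<not> ?thesis"
  obtain a0 a1 b0 b1 c0 c1 d0 d1 where
    st: "s = ([:a0, a1:], [:b0, b1:])" "t = ([:c0, c1:], [:d0, d1:])"
    using assms(1,2) degree_le_1_eq_pCons unfolding mem_sections by (metis prod.collapse)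
  with \<open>\<not> ?thesis\<close> have minors: "a0 * c1 = a1 * c0" "a0 * d1 = a1 * d0" "b0 * c1 = b1 * c0" "b0 * d1 = b1 * d0"
    by auto
  from assms(3) have det: "a0 * d0 = c0 * b0" "a0 * d1 + a1 * d0 = c0 * b1 + c1 * b0" "a1 * d1 = c1 * b1"
    by (simp_all add: st det_pair_def algebra_simps)
  \<comment> \<open>the two middle Pluecker coordinates have vanishing sum by det, and vanishing difference by the minors\<close>
  have "a0 * d1 = c0 * b1" "a1 * d0 = c1 * b0"
    using det(2) minors by algebra+
  then have "wedge (coord 1 s) (coord 1 t) i j = 0" for i j
    using minors det assms(1,2) coord_eq_0[of _ 1 1]
    by (cases "i < 4 \<and> j < 4")
      (auto simp: st wedge_def coord_def less_Suc_eq numeral_eq_Suc algebra_simps)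
  then show False
    using assms(4) by blast
qed

lemma det_pair_tangent_surj_1_1:
  assumes "s \<in> sections 1 1" "t \<in> sections 1 1" "det_pair s t = 0"
    and "wedge (coord 1 s) (coord 1 t) \<noteq> (\<lambda>i j. 0)" "degree c \<le> 2"
  shows "\<exists>x\<in>sections 1 1. \<exists>y\<in>sections 1 1. c = det_pair s y + det_pair x t"
proof -
  define I where "I = {det_pair s y + det_pair x t | x y. x \<in> sections 1 1 \<and> y \<in> sections 1 1}"
  have I_add: "f + g \<in> I" if fg: "f \<in> I" "g \<in> I" for f g
  proof -
    obtain x y x' y' where "x \<in> sections 1 1" "y \<in> sections 1 1" "x' \<in> sections 1 1" "y' \<in> sections 1 1"
      and "f = det_pair s y + det_pair x t" "g = det_pair s y' + det_pair x' t"
      using fg unfolding I_def by blast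
    then show ?thesis
      unfolding I_def
      by (intro CollectI exI[of _ "x + x'"] exI[of _ "y + y'"])
        (simp add: sections_add det_pair_add_left det_pair_add_right algebra_simps)
  qed
  have I_mult: "f * h \<in> I" if "f \<in> {fst s, snd s, fst t, snd t}" "degree h \<le> 1" for f h
  proof -
    have h: "(0, h) \<in> sections 1 1" "(h, 0) \<in> sections 1 1" "(0, - h) \<in> sections 1 1" "(- h, 0) \<in> sections 1 1"
      using that(2) by (simp_all add: mem_sections)
    have "f * h = det_pair s (0, h) + det_pair 0 t \<or> f * h = det_pair s (- h, 0) + det_pair 0 t
        \<or> f * h = det_pair s 0 + det_pair (0, - h) t \<or> f * h = det_pair s 0 + det_pair (h, 0) t"
      using that(1) by (auto simp: det_pair_def)
    then show ?thesis
      unfolding I_def using h zero_mem_sections by blast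
  qed
  obtain p q where "p \<in> {fst s, snd s}" "q \<in> {fst t, snd t}"
    and "coeff p 0 * coeff q 1 \<noteq> coeff p 1 * coeff q 0"
    using independent_components_if_wedge_nonzero_1_1[OF assms(1-4)] by blast
  moreover from this have "degree p \<le> 1" "degree q \<le> 1"
    using assms(1,2) by (auto simp: mem_sections)
  ultimately obtain u v where "degree u \<le> 1" "degree v \<le> 1" "c = p * u + q * v"
    using in_span_of_independent_linear_polys[OF _ _ assms(5)] by blast
  with \<open>p \<in> {fst s, snd s}\<close> \<open>q \<in> {fst t, snd t}\<close> have "c \<in> I"
    using I_add I_mult by blast
  then show ?thesis
    by (auto simp: I_def)
qed

lemma transversal_Gr_K_1_1: "transversal_Gr_K 1 1"
  unfolding transversal_Gr_K_def
proof (intro ballI impI)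
  fix p assume p: "p \<in> gr_cone 1 1 \<inter> K_perp 1 1" "p \<noteq> (\<lambda>i j. 0)"
  then obtain s t where st: "s \<in> sections 1 1" "t \<in> sections 1 1" "p = wedge (coord 1 s) (coord 1 t)"
    by (auto simp: gr_cone_def)
  with p have "det_pair s t = 0"
    using wedge_coord_mem_K_perp_iff by blast
  with st p show "{(\<lambda>i j. x i j + y i j) | x y.
      x \<in> tangent_space (gr_cone 1 1) p \<and> y \<in> tangent_space (K_perp 1 1) p} = wedge2 1 1"
    by (intro tangent_spaces_sum_eq_wedge2_if_det_pair_surj det_pair_tangent_surj_1_1) simp_all
qed

theorem proposition5p6:
  fixes a b :: nat
  assumes "1 \<le> a" and "1 \<le> b"
  shows "transversal_Gr_K a b \<longleftrightarrow> (a = 1 \<and> b = 1)"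
  using transversal_Gr_K_imp_eq_1[OF assms] transversal_Gr_K_1_1 by blast

end
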